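(* For any $x>0$ with $x\neq 1$, \[ \sqrt{x}+\frac{4}{\ln^{2}x}\left(\frac{1}{8}(x-1)\ln x+\sqrt{x}-\frac{x+1}{2}\right)\le\frac{1+x}{2}. \] *)

theory Defs
  imports Complex_Main
begin

end

theory Submission
  imports Defs
begin

text \<open>Write \<open>x = exp (4 * u)\<close>. Then \<open>(1 + x) / 2\<close> minus the left-hand side equals
  \<open>sqrt x * sinh u * ((1 + 4 * u\<^sup>2) * sinh u - u * cosh u) / (2 * u\<^sup>2)\<close>, so the claim
  amounts to the bound \<open>tanh u \<ge> u / (1 + 4 * u\<^sup>2)\<close> for \<open>u > 0\<close> (and its mirror image for
  \<open>u < 0\<close>). That bound holds because the difference \<open>(1 + 4 * u\<^sup>2) * sinh u - u * cosh u\<close>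
  vanishes at \<open>0\<close> and has derivative \<open>7 * u * sinh u + 4 * u\<^sup>2 * cosh u \<ge> 0\<close>.\<close>

lemma mult_cosh_le_sinh:
  fixes u :: real
  assumes "u \<ge> 0"
  shows "u * cosh u \<le> (1 + 4 * u\<^sup>2) * sinh u"
proof -
  define h :: "real \<Rightarrow> real" where "h v = (1 + 4 * v\<^sup>2) * sinh v - v * cosh v" for v
  have h_deriv: "(h has_real_derivative 7 * v * sinh v + 4 * v\<^sup>2 * cosh v) (at v)" for v
    unfolding h_def
    by (auto intro!: derivative_eq_intros simp: algebra_simps power2_eq_square)
  have "h 0 \<le> h u"
  proof (rule DERIV_nonneg_imp_nondecreasing[OF assms])
    fix v :: real
    assume "0 \<le> v" "v \<le> u"
    then have "0 \<le> 7 * v * sinh v + 4 * v\<^sup>2 * cosh v"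
      by (intro add_nonneg_nonneg mult_nonneg_nonneg) (auto simp: cosh_real_nonneg)
    then show "\<exists>d. (h has_real_derivative d) (at v) \<and> 0 \<le> d"
      using h_deriv by blast
  qed
  then show ?thesis by (simp add: h_def)
qed

lemma sinh_mult_sinh_cosh_gap_nonneg:
  fixes u :: real
  shows "0 \<le> sinh u * ((1 + 4 * u\<^sup>2) * sinh u - u * cosh u)"
proof (cases "u \<ge> 0")
  case True
  then show ?thesis using mult_cosh_le_sinh[OF True] by simp
next
  case False
  then have "(-u) * cosh (-u) \<le> (1 + 4 * (-u)\<^sup>2) * sinh (-u)"
    by (intro mult_cosh_le_sinh) simp
  moreover have "sinh u \<le> 0" using False by simp
  ultimately show ?thesis by (simp add: mult_nonpos_nonpos)
qed

lemma corollary2p4_gap_eq: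
  fixes x :: real
  assumes "x > 0" and "x \<noteq> 1"
  defines "u \<equiv> ln x / 4"
  shows "(1 + x) / 2 - (sqrt x + 4 / (ln x)^2 * ((1/8) * (x - 1) * ln x + sqrt x - (x + 1) / 2))
    = sqrt x * sinh u * ((1 + 4 * u\<^sup>2) * sinh u - u * cosh u) / (2 * u\<^sup>2)"
proof -
  define a where "a = exp u"
  have "a > 0" by (simp add: a_def)
  have x_eq: "x = a ^ 4"
    using assms(1) by (simp add: a_def u_def flip: exp_of_nat_mult)
  have sqrt_eq: "sqrt x = a\<^sup>2"
    using x_eq \<open>a > 0\<close> by (simp add: real_sqrt_unique flip: power_mult)
  have ln_eq: "ln x = 4 * u" by (simp add: u_def)
  have "u \<noteq> 0" using assms by (simp add: u_def)
  have sinh_eq: "sinh u = (a - 1 / a) / 2" and cosh_eq: "cosh u = (a + 1 / a) / 2"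
    by (simp_all add: sinh_field_def cosh_field_def a_def exp_minus field_simps)
  show ?thesis
    unfolding ln_eq sqrt_eq sinh_eq cosh_eq
    using \<open>u \<noteq> 0\<close> \<open>a > 0\<close> unfolding x_eq
    by (simp add: field_simps power2_eq_square power4_eq_xxxx)
qed

theorem corollary2p4:
  fixes x :: real
  assumes "x > 0" and "x \<noteq> 1"
  shows "sqrt x + 4 / (ln x)^2 * ((1/8) * (x - 1) * ln x + sqrt x - (x + 1) / 2) \<le> (1 + x) / 2"
proof -
  define u where "u = ln x / 4"
  have "0 \<le> sqrt x * sinh u * ((1 + 4 * u\<^sup>2) * sinh u - u * cosh u) / (2 * u\<^sup>2)"
    using sinh_mult_sinh_cosh_gap_nonneg[of u] assms(1) by (simp add: mult.assoc)
  then show ?thesis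
    using corollary2p4_gap_eq[OF assms, folded u_def] by linarith
qed

end
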